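(* Let $L$ be a complete finite-dimensional Lie algebra over any field. Then there exists a Lie algebra $H$ with $H^2\cong L$ if and only if $L$ is perfect, i.e. $L^2=L$.
   Context: A Lie algebra $L$ is complete if $Z(L)=0$ and every derivation of $L$ is inner, i.e. $\mathrm{Der}(L)=\mathrm{ad}(L)$. $H^2=[H,H]$ denotes the derived algebra. *)

theory Defs
  imports Main "HOL.Vector_Spaces"
begin

text \<open>A Lie algebra over a field 'k: the whole type 'v is the underlying vector space,
  with scalar multiplication s and bracket b.\<close>

definition lie_algebra :: "('k::field \<Rightarrow> 'v::ab_group_add \<Rightarrow> 'v) \<Rightarrow> ('v \<Rightarrow> 'v \<Rightarrow> 'v) \<Rightarrow> bool" where
  "lie_algebra s b \<longleftrightarrow> vector_space s
     \<and> (\<forall>x y z. b (x + y) z = b x z + b y z)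
     \<and> (\<forall>x y z. b x (y + z) = b x y + b x z)
     \<and> (\<forall>a x y. b (s a x) y = s a (b x y))
     \<and> (\<forall>a x y. b x (s a y) = s a (b x y))
     \<and> (\<forall>x. b x x = 0)
     \<and> (\<forall>x y z. b x (b y z) + b y (b z x) + b z (b x y) = 0)"

definition fin_dim :: "('k::field \<Rightarrow> 'v::ab_group_add \<Rightarrow> 'v) \<Rightarrow> bool" where
  "fin_dim s \<longleftrightarrow> (\<exists>B. finite B \<and> module.span s B = UNIV)"

definition derived :: "('k::field \<Rightarrow> 'v::ab_group_add \<Rightarrow> 'v) \<Rightarrow> ('v \<Rightarrow> 'v \<Rightarrow> 'v) \<Rightarrow> 'v set" where
  "derived s b = module.span s {b x y | x y. True}"

definition perfect :: "('k::field \<Rightarrow> 'v::ab_group_add \<Rightarrow> 'v) \<Rightarrow> ('v \<Rightarrow> 'v \<Rightarrow> 'v) \<Rightarrow> bool" where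
  "perfect s b \<longleftrightarrow> derived s b = UNIV"

definition lie_center :: "('v \<Rightarrow> 'v \<Rightarrow> 'v::ab_group_add) \<Rightarrow> 'v set" where
  "lie_center b = {z. \<forall>x. b z x = 0}"

definition derivation :: "('k::field \<Rightarrow> 'v::ab_group_add \<Rightarrow> 'v) \<Rightarrow> ('v \<Rightarrow> 'v \<Rightarrow> 'v) \<Rightarrow> ('v \<Rightarrow> 'v) \<Rightarrow> bool" where
  "derivation s b D \<longleftrightarrow> module_hom s s D \<and> (\<forall>x y. D (b x y) = b (D x) y + b x (D y))"

definition complete_lie :: "('k::field \<Rightarrow> 'v::ab_group_add \<Rightarrow> 'v) \<Rightarrow> ('v \<Rightarrow> 'v \<Rightarrow> 'v) \<Rightarrow> bool" where
  "complete_lie s b \<longleftrightarrow> lie_center b = {0} \<and> (\<forall>D. derivation s b D \<longrightarrow> (\<exists>a. D = b a))"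

definition derived_iso ::
  "('k::field \<Rightarrow> 'h::ab_group_add \<Rightarrow> 'h) \<Rightarrow> ('h \<Rightarrow> 'h \<Rightarrow> 'h) \<Rightarrow>
   ('k \<Rightarrow> 'v::ab_group_add \<Rightarrow> 'v) \<Rightarrow> ('v \<Rightarrow> 'v \<Rightarrow> 'v) \<Rightarrow> bool" where
  "derived_iso sH bH sL bL \<longleftrightarrow> (\<exists>f. bij_betw f (derived sH bH) UNIV
     \<and> (\<forall>x\<in>derived sH bH. \<forall>y\<in>derived sH bH. f (x + y) = f x + f y)
     \<and> (\<forall>a. \<forall>x\<in>derived sH bH. f (sH a x) = sL a (f x))
     \<and> (\<forall>x\<in>derived sH bH. \<forall>y\<in>derived sH bH. f (bH x y) = bL (f x) (f y)))"

end

theory Submission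
  imports Defs
begin

text \<open>
  Let \<open>g\<close> be the inverse of an isomorphism \<open>H\<^sup>2 \<cong> L\<close>, an injective Lie homomorphism
  \<open>L \<rightarrow> H\<close> with image \<open>H\<^sup>2\<close>. For \<open>h \<in> H\<close>, \<open>ad h\<close> preserves the ideal \<open>g(L)\<close>, so its
  pullback to \<open>L\<close> is a derivation, hence inner: \<open>ad h = ad (g a)\<close> on \<open>g(L)\<close>. So every
  \<open>h\<close> is \<open>g a + z\<close> with \<open>z\<close> centralizing \<open>g(L)\<close>. For two such \<open>z\<^sub>1, z\<^sub>2\<close> the bracket
  \<open>[z\<^sub>1, z\<^sub>2]\<close> lies in \<open>H\<^sup>2 = g(L)\<close> and, by Jacobi, centralizes \<open>g(L)\<close>; as \<open>Z(L) = 0\<close> it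
  vanishes. Hence every bracket of \<open>H\<close> is \<open>g [a\<^sub>1, a\<^sub>2]\<close>, so \<open>g(L) = H\<^sup>2 \<subseteq> g(L\<^sup>2)\<close> and
  \<open>L = L\<^sup>2\<close>. Conversely, a perfect \<open>L\<close> is its own
  derived algebra.
\<close>

locale lie =
  fixes s :: "'k::field \<Rightarrow> 'v::ab_group_add \<Rightarrow> 'v" and b :: "'v \<Rightarrow> 'v \<Rightarrow> 'v"
  assumes lie_algebra: "lie_algebra s b"
begin

sublocale vector_space s
  using lie_algebra by (simp add: lie_algebra_def)

lemma bracket_add_left [simp]: "b (x + y) z = b x z + b y z"
  and bracket_add_right [simp]: "b x (y + z) = b x y + b x z"
  and bracket_scale_left [simp]: "b (s a x) y = s a (b x y)"
  and bracket_scale_right [simp]: "b x (s a y) = s a (b x y)"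
  and bracket_self [simp]: "b x x = 0"
  and jacobi: "b x (b y z) + b y (b z x) + b z (b x y) = 0"
  using lie_algebra by (simp_all add: lie_algebra_def)

lemma bracket_zero_left [simp]: "b 0 y = 0"
  using bracket_add_left[of 0 0 y] by simp

lemma bracket_zero_right [simp]: "b x 0 = 0"
  using bracket_add_right[of x 0 0] by simp

lemma bracket_antisym: "b y x = - b x y"
proof -
  have "b (x + y) (x + y) = b x x + b x y + (b y x + b y y)"
    by (simp del: bracket_self)
  then have "b y x + b x y = 0" by (simp add: add.commute)
  then show ?thesis by (simp add: eq_neg_iff_add_eq_0)
qed

lemma bracket_minus_right [simp]: "b x (- y) = - b x y"
  by (metis bracket_antisym bracket_scale_left scale_minus_left scale_one)

lemma bracket_diff_left [simp]: "b (x - y) z = b x z - b y z"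
  by (metis bracket_add_left add_diff_cancel diff_add_cancel)

lemma bracket_leibniz: "b h (b u v) = b (b h u) v + b u (b h v)"
proof -
  have "b u (b v h) = - b u (b h v)" "b v (b h u) = - b (b h u) v"
    by (simp_all add: bracket_antisym[of h v] bracket_antisym[of "b h u" v])
  with jacobi[of h u v] show ?thesis
    by (simp add: algebra_simps eq_neg_iff_add_eq_0)
qed

lemma bracket_in_derived: "b x y \<in> derived s b"
  unfolding derived_def by (rule span_base) blast

lemma subspace_derived: "subspace (derived s b)"
  by (simp add: derived_def)

lemma derived_iso_inverse:
  assumes iso: "derived_iso s b sL bL" and L: "vector_space sL"
  obtains g where "inj g" "range g = derived s b" "module_hom sL s g"
    "\<And>x y. g (bL x y) = b (g x) (g y)"
proof -
  obtain f where bij: "bij_betw f (derived s b) UNIV"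
    and f_add: "\<And>x y. x \<in> derived s b \<Longrightarrow> y \<in> derived s b \<Longrightarrow> f (x + y) = f x + f y"
    and f_scale: "\<And>a x. x \<in> derived s b \<Longrightarrow> f (s a x) = sL a (f x)"
    and f_bracket: "\<And>x y. x \<in> derived s b \<Longrightarrow> y \<in> derived s b \<Longrightarrow> f (b x y) = bL (f x) (f y)"
    using iso unfolding derived_iso_def by blast
  define g where "g = inv_into (derived s b) f"
  have g_bij: "bij_betw g UNIV (derived s b)"
    unfolding g_def using bij by (rule bij_betw_inv_into)
  then have g_in: "g z \<in> derived s b" for z
    by (meson UNIV_I bij_betw_apply)
  have f_g: "f (g z) = z" for z
    unfolding g_def using bij by (simp add: bij_betw_inv_into_right)
  have g_eqI: "g z = x" if "x \<in> derived s b" "f x = z" for x z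
    unfolding g_def using bij that by (simp add: bij_betw_def inv_into_f_eq)
  show ?thesis
  proof
    show "inj g" "range g = derived s b"
      using g_bij by (simp_all add: bij_betw_def)
    show "module_hom sL s g"
      unfolding module_hom_iff
      using L vector_space_axioms g_in subspace_derived
      by (auto simp: module_iff_vector_space f_add f_scale f_g subspace_add subspace_scale
          intro!: g_eqI)
    show "g (bL x y) = b (g x) (g y)" for x y
      by (rule g_eqI) (simp_all add: bracket_in_derived f_bracket g_in f_g)
  qed
qed

end

locale complete_ideal_containing_derived = H: lie s b + L: lie sL bL
  for s :: "'k::field \<Rightarrow> 'h::ab_group_add \<Rightarrow> 'h" and b
    and sL :: "'k \<Rightarrow> 'v::ab_group_add \<Rightarrow> 'v" and bL +
  fixes g :: "'v \<Rightarrow> 'h"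
  assumes complete: "complete_lie sL bL"
    and inj: "inj g"
    and linear: "module_hom sL s g"
    and hom_bracket: "\<And>x y. g (bL x y) = b (g x) (g y)"
    and bracket_in_image: "\<And>x y. b x y \<in> range g"
begin

sublocale g: module_hom sL s g
  by (rule linear)

definition ad_restrict :: "'h \<Rightarrow> 'v \<Rightarrow> 'v" where
  "ad_restrict h x = inv g (b h (g x))"

lemma image_ad_restrict [simp]: "g (ad_restrict h x) = b h (g x)"
  unfolding ad_restrict_def by (rule f_inv_into_f[OF bracket_in_image])

lemma derivation_ad_restrict: "derivation sL bL (ad_restrict h)"
  unfolding derivation_def module_hom_iff module_iff_vector_space
proof (intro conjI allI L.vector_space_axioms)
  show "ad_restrict h (x + y) = ad_restrict h x + ad_restrict h y" for x y
    by (rule injD[OF inj]) (simp add: g.add)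
  show "ad_restrict h (sL c x) = sL c (ad_restrict h x)" for c x
    by (rule injD[OF inj]) (simp add: g.scale)
  show "ad_restrict h (bL x y) = bL (ad_restrict h x) y + bL x (ad_restrict h y)" for x y
    by (rule injD[OF inj]) (simp add: g.add hom_bracket H.bracket_leibniz[of h "g x"])
qed

lemma ad_on_image_eq_inner:
  obtains a where "\<And>x. b h (g x) = b (g a) (g x)"
proof -
  obtain a where "ad_restrict h = bL a"
    using complete derivation_ad_restrict unfolding complete_lie_def by blast
  then have "b h (g x) = b (g a) (g x)" for x
    by (metis image_ad_restrict hom_bracket)
  then show ?thesis ..
qed

lemma centralizes_image_imp_zero:
  assumes "\<And>x. b (g a) (g x) = 0"
  shows "a = 0"
proof -
  have "bL a x = 0" for x
    by (rule injD[OF inj]) (simp add: hom_bracket assms)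
  then have "a \<in> lie_center bL"
    by (simp add: lie_center_def)
  with complete show ?thesis
    by (simp add: complete_lie_def)
qed

lemma image_plus_centralizer_decomp:
  obtains a z where "h = g a + z" "\<And>x. b z (g x) = 0"
proof -
  obtain a where "\<And>x. b h (g x) = b (g a) (g x)"
    using ad_on_image_eq_inner by blast
  then have "h = g a + (h - g a)" "\<And>x. b (h - g a) (g x) = 0"
    by simp_all
  then show ?thesis ..
qed

lemma bracket_centralizers_eq_zero:
  assumes z1: "\<And>x. b z1 (g x) = 0" and z2: "\<And>x. b z2 (g x) = 0"
  shows "b z1 z2 = 0"
proof -
  obtain c where c: "b z1 z2 = g c"
    using bracket_in_image by blast
  have "b (g c) (g x) = 0" for x
  proof -
    have "b (g x) (b z1 z2) = b (b (g x) z1) z2 + b z1 (b (g x) z2)"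
      by (rule H.bracket_leibniz)
    also have "\<dots> = 0"
      using z1[of x] z2[of x] H.bracket_antisym[of z1 "g x"] H.bracket_antisym[of z2 "g x"]
      by simp
    finally show ?thesis
      using H.bracket_antisym[of "g x" "b z1 z2"] c by simp
  qed
  then have "c = 0"
    by (rule centralizes_image_imp_zero)
  with c show ?thesis
    by simp
qed

lemma bracket_eq_image_bracket:
  obtains a1 a2 where "b x y = g (bL a1 a2)"
proof -
  obtain a1 z1 where x: "x = g a1 + z1" and z1: "\<And>u. b z1 (g u) = 0"
    using image_plus_centralizer_decomp by blast
  obtain a2 z2 where y: "y = g a2 + z2" and z2: "\<And>u. b z2 (g u) = 0"
    using image_plus_centralizer_decomp by blast
  have "b x y = b (g a1) (g a2) - b z2 (g a1) + b z1 (g a2) + b z1 z2"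
    unfolding x y using H.bracket_antisym[of z2 "g a1"] by (simp add: algebra_simps)
  also have "\<dots> = g (bL a1 a2)"
    by (simp add: z1 z2 bracket_centralizers_eq_zero[OF z1 z2] hom_bracket)
  finally show ?thesis ..
qed

lemma derived_subset_image: "derived s b \<subseteq> g ` derived sL bL"
proof -
  have "b x y \<in> g ` {bL x y | x y. True}" for x y
    by (rule bracket_eq_image_bracket[of x y]) blast
  then have "{b x y | x y. True} \<subseteq> g ` {bL x y | x y. True}"
    by blast
  then have "H.span {b x y | x y. True} \<subseteq> H.span (g ` {bL x y | x y. True})"
    by (rule H.span_mono)
  then show ?thesis
    by (simp add: derived_def g.span_image)
qed

end

lemma derived_iso_complete_imp_perfect:
  assumes H: "lie_algebra sH bH" and L: "lie_algebra sL bL" and complete: "complete_lie sL bL"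
    and iso: "derived_iso sH bH sL bL"
  shows "perfect sL bL"
proof -
  interpret H: lie sH bH
    using H by unfold_locales
  interpret L: lie sL bL
    using L by unfold_locales
  obtain g where inj: "inj g" and image: "range g = derived sH bH"
    and linear: "module_hom sL sH g" and hom: "\<And>x y. g (bL x y) = bH (g x) (g y)"
    using H.derived_iso_inverse[OF iso L.vector_space_axioms] by metis
  interpret complete_ideal_containing_derived sH bH sL bL g
    using H.lie_axioms L.lie_axioms complete inj linear hom image H.bracket_in_derived
    by (simp add: complete_ideal_containing_derived_def complete_ideal_containing_derived_axioms_def)
  have "g ` UNIV \<subseteq> g ` derived sL bL"
    using image derived_subset_image by simp
  then show ?thesis
    using inj by (auto simp: perfect_def inj_image_subset_iff)
qed

lemma perfect_imp_derived_iso_self: "perfect s b \<Longrightarrow> derived_iso s b s b"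
  unfolding perfect_def derived_iso_def by (intro exI[of _ id]) simp

theorem corollary2p2:
  fixes sL :: "'k::field \<Rightarrow> 'v::ab_group_add \<Rightarrow> 'v" and bL :: "'v \<Rightarrow> 'v \<Rightarrow> 'v"
  assumes "lie_algebra sL bL" and "fin_dim sL" and "complete_lie sL bL"
  shows "(\<forall>(sH :: 'k \<Rightarrow> 'h::ab_group_add \<Rightarrow> 'h) bH.
            lie_algebra sH bH \<and> derived_iso sH bH sL bL \<longrightarrow> perfect sL bL)
       \<and> (perfect sL bL \<longrightarrow>
            (\<exists>(sH :: 'k \<Rightarrow> 'v \<Rightarrow> 'v) bH. lie_algebra sH bH \<and> derived_iso sH bH sL bL))"
  using assms(1,3) derived_iso_complete_imp_perfect perfect_imp_derived_iso_self by blast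

end
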